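(* Consider Algorithm AUX with parameter $t_0$ on an instance satisfying the standing assumption, with an edge labeling as in the context. For every offline vertex $u$ and every $t\in[0,1]$, we have $f_u(t)\le f(t)$.
   Context: **Model.** Poisson arrival model. Each online type $i$ independently arrives according to a Poisson process of rate $\lambda_i$ on $[0,1]$. On arrival, a vertex is immediately and irrevocably matched to an unmatched offline neighbor or discarded. Each offline vertex is matched at most once. The instance is a bipartite graph $(I,J,E)$ with rates $\lambda_i>0$. **Standing assumption.** There are values $x_{ij}\ge0$ (an optimal Jaillet–Lu LP solution) with $\sum_i x_{ij}=1$ for all $j$, and each type is one of two kinds: - first-class: one neighbor $j$, with $x_{ij}=\lambda_i$; - second-class: two neighbors $j_1,j_2$, with $x_{ij_1}=x_{ij_2}=\lambda_i/2$. **Labeling.** Each edge is labeled first-class or second-class. Edges of first-class types are labeled first-class. For every $j$, the first-class-labeled edges at $j$ have total $x$-value $1-\ln2$. **Reference process.** $H$ has offline vertices $a,b$; a type of rate $2\ln2$ adjacent to both; and types of rate $1-\ln2$ adjacent only to $a$, resp. only to $b$. Algorithm RES with parameter $t_0$ works as follows: - single-neighbor arrivals are matched if their neighbor is unmatched; - a two-neighbor arrival at time $t>t_0$ with an unmatched neighbor is matched to a uniformly random unmatched neighbor. On $H$ under RES, $f(t)$ is the probability that a given offline vertex is matched by time $t$, $g(t)$ the probability both are, and $\bar g=1-g$. **Algorithm AUX (parameter $t_0$).** Under AUX: - $f_u(t)$ is the probability that offline $u$ is matched by time $t$, and $\bar f_u=1-f_u$; - $g'_{u,v}(t)$ is the probability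 that both $u$ and $v$ are unmatched at time $t$. Edges are used only if their offline endpoint is unmatched. - A first-class arrival is matched to its neighbor if possible. - A second-class arrival of type $i$ with neighbors $u,v$ chooses at most one edge, with disjoint probabilities: - each first-class-labeled edge $(i,u)$ with probability $1/2$; - if the arrival time is $t>t_0$, each second-class-labeled edge $(i,u)$ with probability $\frac12\min\{\bar g(t)/(2\bar f_u(t)-g'_{u,v}(t)),1\}$ if $v$ is unmatched, or $\min\{\bar g(t)/(2\bar f_u(t)-g'_{u,v}(t)),1\}$ if $v$ is matched. *)

theory Defs
  imports "HOL-Analysis.Analysis"
begin

text \<open>
  Continuous-time Markov chains on the state space of sets of matched offline
  vertices.  A state is the set S (a subset of the offline vertex set J) of
  matched offline vertices; r t S u is the instantaneous rate at which the
  unmatched offline vertex u becomes matched at time t when the current state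
  is S.  p t S is the probability of being in state S at time t.
\<close>

definition kolmogorov ::
  "'j set \<Rightarrow> (real \<Rightarrow> 'j set \<Rightarrow> 'j \<Rightarrow> real) \<Rightarrow> (real \<Rightarrow> 'j set \<Rightarrow> real) \<Rightarrow> bool" where
  "kolmogorov J r p \<longleftrightarrow>
     (\<forall>t\<in>{0..1}. \<forall>S\<in>Pow J.
        ((\<lambda>s. (\<Sum>u\<in>S. p s (S - {u}) * r s (S - {u}) u) - p s S * (\<Sum>u\<in>J - S. r s S u))
          has_integral (p t S - (if S = {} then 1 else 0))) {0..t})"

text \<open>Offline vertices of H: a = True, b = False.  Single-neighbor types of rate
  1 - ln 2 at each vertex; a two-neighbor type of rate 2 ln 2.\<close>

definition res_rate :: "real \<Rightarrow> real \<Rightarrow> bool set \<Rightarrow> bool \<Rightarrow> real" where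
  "res_rate t0 t S u =
     (1 - ln 2) + (if t0 < t then 2 * ln 2 * (if (\<not> u) \<in> S then 1 else 1/2) else 0)"

definition res_f :: "(real \<Rightarrow> bool set \<Rightarrow> real) \<Rightarrow> real \<Rightarrow> real" where
  "res_f q t = (\<Sum>S\<in>{S. True \<in> S}. q t S)"

definition res_g :: "(real \<Rightarrow> bool set \<Rightarrow> real) \<Rightarrow> real \<Rightarrow> real" where
  "res_g q t = q t UNIV"

definition aux_fbar :: "'j set \<Rightarrow> (real \<Rightarrow> 'j set \<Rightarrow> real) \<Rightarrow> 'j \<Rightarrow> real \<Rightarrow> real" where
  "aux_fbar J p u t = (\<Sum>S\<in>{S\<in>Pow J. u \<notin> S}. p t S)"

definition aux_f :: "'j set \<Rightarrow> (real \<Rightarrow> 'j set \<Rightarrow> real) \<Rightarrow> 'j \<Rightarrow> real \<Rightarrow> real" where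
  "aux_f J p u t = (\<Sum>S\<in>{S\<in>Pow J. u \<in> S}. p t S)"

definition aux_gp :: "'j set \<Rightarrow> (real \<Rightarrow> 'j set \<Rightarrow> real) \<Rightarrow> 'j \<Rightarrow> 'j \<Rightarrow> real \<Rightarrow> real" where
  "aux_gp J p u v t = (\<Sum>S\<in>{S\<in>Pow J. u \<notin> S \<and> v \<notin> S}. p t S)"

text \<open>Probability that an arrival of type i at time t, in state S (with u unmatched),
  is matched along edge (i,u).  lbl i u = True means the edge is labeled first-class.
  gbar is the function 1 - g of the reference process.\<close>
definition aux_prob ::
  "'j set \<Rightarrow> ('i \<Rightarrow> 'j set) \<Rightarrow> ('i \<Rightarrow> 'j \<Rightarrow> bool) \<Rightarrow> real \<Rightarrow> (real \<Rightarrow> real)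
    \<Rightarrow> (real \<Rightarrow> 'j set \<Rightarrow> real) \<Rightarrow> 'i \<Rightarrow> real \<Rightarrow> 'j set \<Rightarrow> 'j \<Rightarrow> real" where
  "aux_prob J nbr lbl t0 gbar p i t S u =
     (if card (nbr i) = 1 then 1
      else (let v = the_elem (nbr i - {u}) in
            if lbl i u then 1/2
            else if t0 < t then
              (let m = min (gbar t / (2 * aux_fbar J p u t - aux_gp J p u v t)) 1
               in if v \<in> S then m else m / 2)
            else 0))"

definition aux_rate ::
  "'i set \<Rightarrow> 'j set \<Rightarrow> ('i \<Rightarrow> 'j set) \<Rightarrow> ('i \<Rightarrow> real) \<Rightarrow> ('i \<Rightarrow> 'j \<Rightarrow> bool) \<Rightarrow> real
    \<Rightarrow> (real \<Rightarrow> real) \<Rightarrow> (real \<Rightarrow> 'j set \<Rightarrow> real) \<Rightarrow> real \<Rightarrow> 'j set \<Rightarrow> 'j \<Rightarrow> real" where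
  "aux_rate I J nbr lam lbl t0 gbar p t S u =
     (\<Sum>i\<in>{i\<in>I. u \<in> nbr i}. lam i * aux_prob J nbr lbl t0 gbar p i t S u)"

end

theory Submission
  imports Defs
begin

text \<open>Both \<open>f\<close> and \<open>f\<^sub>u\<close> solve integral (Kolmogorov) equations on \<open>[0,1]\<close>.  In the reference
  process \<open>H\<close> the two offline vertices are symmetric, and conservation of probability turns the
  forward equation into \<open>f' = (1 - ln 2) (1 - f) + [t > t\<^sub>0] ln 2 (1 - g)\<close>.  Under AUX the rate at
  which \<open>u\<close> gets matched splits over the edges at \<open>u\<close>: first-class-labeled edges (total
  \<open>x\<close>-value \<open>1 - ln 2\<close>) contribute \<open>(1 - ln 2) (1 - f\<^sub>u)\<close>, and the cap
  \<open>min {(1 - g) / (2 (1 - f\<^sub>u) - g'), 1}\<close> limits the second-class-labeled edges (total \<open>x\<close>-value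
  \<open>ln 2\<close>) to \<open>ln 2 (1 - g)\<close> after \<open>t\<^sub>0\<close>.  Hence \<open>f\<^sub>u' \<le> (1 - ln 2) (1 - f\<^sub>u) + [t > t\<^sub>0] ln 2 (1 - g)\<close>,
  and a comparison principle for integral equations yields \<open>f\<^sub>u \<le> f\<close>.\<close>

section \<open>Integral equations on an interval\<close>

lemma integral_equation_increment:
  fixes h y :: "real \<Rightarrow> real"
  assumes y_eq: "\<forall>t\<in>{a..b}. (h has_integral (y t - c)) {a..t}"
    and "a \<le> s" "s \<le> t" "t \<le> b"
  shows "(h has_integral (y t - y s)) {s..t}"
proof -
  have at_t: "(h has_integral (y t - c)) {a..t}" and at_s: "(h has_integral (y s - c)) {a..s}"
    using y_eq assms(2-4) by auto
  have "h integrable_on {s..t}"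
    using integrable_subinterval_real[OF has_integral_integrable[OF at_t]] assms(2) by simp
  then have "(h has_integral ((y s - c) + integral {s..t} h)) {a..t}"
    using at_s assms(2,3) by (intro has_integral_combine[of a s t]) auto
  then have "y t - c = (y s - c) + integral {s..t} h"
    using at_t has_integral_unique by blast
  then show ?thesis
    using \<open>h integrable_on {s..t}\<close> by (simp add: has_integral_iff)
qed

lemma integral_equation_continuous_on:
  fixes h y :: "real \<Rightarrow> real"
  assumes y_eq: "\<forall>t\<in>{a..b}. (h has_integral (y t - c)) {a..t}"
  shows "continuous_on {a..b} y"
proof (cases "a \<le> b")
  case True
  have "h integrable_on {a..b}" using y_eq True by auto
  then have "continuous_on {a..b} (\<lambda>t. c + integral {a..t} h)"
    by (intro continuous_intros indefinite_integral_continuous_1)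
  moreover have "c + integral {a..t} h = y t" if "t \<in> {a..b}" for t
    using integral_unique[OF y_eq[rule_format, OF that]] by simp
  ultimately show ?thesis by (rule continuous_on_eq)
qed simp

lemma integral_equation_nonneg:
  fixes h y :: "real \<Rightarrow> real"
  assumes y_eq: "\<forall>t\<in>{a..b}. (h has_integral (y t - c)) {a..t}"
    and "c \<ge> 0"
    and h_nonneg: "\<forall>s\<in>{a..b}. y s < 0 \<longrightarrow> h s \<ge> 0"
  shows "\<forall>t\<in>{a..b}. y t \<ge> 0"
proof (rule ccontr)
  assume "\<not> ?thesis"
  then obtain t1 where t1: "a \<le> t1" "t1 \<le> b" "y t1 < 0" by auto
  have ya: "y a = c"
    using integral_unique[OF y_eq[rule_format, of a]] t1 by simp
  have cont: "continuous_on {a..t1} y"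
    using integral_equation_continuous_on[OF y_eq] continuous_on_subset t1 by fastforce
  define K where "K = {a..t1} \<inter> y -` {0..}"
  have "closed K" unfolding K_def by (intro continuous_closed_preimage cont) auto
  moreover have "bounded K" unfolding K_def by (simp add: bounded_Int)
  ultimately have "compact K" by (simp add: compact_eq_bounded_closed)
  moreover have "a \<in> K" unfolding K_def using ya \<open>c \<ge> 0\<close> t1 by auto
  ultimately obtain \<tau> where \<tau>: "\<tau> \<in> K" "\<forall>s\<in>K. s \<le> \<tau>"
    using compact_attains_sup by blast
  then have \<tau>_bounds: "a \<le> \<tau>" "\<tau> \<le> t1" "y \<tau> \<ge> 0" unfolding K_def by auto
  \<comment> \<open>\<open>h\<close> need not be nonnegative at \<open>\<tau>\<close> itself, so integrate from a later point \<open>\<sigma>\<close>.\<close>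
  obtain \<sigma> where \<sigma>: "\<tau> \<le> \<sigma>" "\<sigma> \<le> t1" "y \<sigma> = y t1 / 2"
    using IVT2'[of y t1 "y t1 / 2" \<tau>] continuous_on_subset[OF cont, of "{\<tau>..t1}"] \<tau>_bounds t1
    by auto
  have "\<tau> < \<sigma>"
    using \<sigma> \<tau>_bounds t1 by (cases "\<tau> = \<sigma>") auto
  have "y s < 0" if "s \<in> {\<sigma>..t1}" for s
  proof (rule ccontr)
    assume "\<not> y s < 0"
    then have "s \<in> K" unfolding K_def using that \<tau>_bounds \<sigma> by auto
    then show False using \<tau>(2) \<open>\<tau> < \<sigma>\<close> that by fastforce
  qed
  then have "h s \<ge> 0" if "s \<in> {\<sigma>..t1}" for s
    using h_nonneg that \<tau>_bounds \<sigma> t1 by auto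
  moreover have "(h has_integral (y t1 - y \<sigma>)) {\<sigma>..t1}"
    using integral_equation_increment[OF y_eq] \<tau>_bounds \<sigma> t1 by auto
  ultimately have "y t1 - y \<sigma> \<ge> 0" by (rule has_integral_nonneg[rotated])
  with \<sigma> t1 show False by linarith
qed

lemma integral_equation_comparison:
  fixes f g F G :: "real \<Rightarrow> real"
  assumes F_eq: "\<forall>t\<in>{a..b}. (f has_integral (F t - c)) {a..t}"
    and G_eq: "\<forall>t\<in>{a..b}. (g has_integral (G t - c)) {a..t}"
    and "\<forall>s\<in>{a..b}. F s < G s \<longrightarrow> g s \<le> f s"
  shows "\<forall>t\<in>{a..b}. G t \<le> F t"
proof -
  have "\<forall>t\<in>{a..b}. ((\<lambda>s. f s - g s) has_integral (F t - G t - 0)) {a..t}"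
    using has_integral_diff[OF F_eq[rule_format] G_eq[rule_format]] by simp
  then have "\<forall>t\<in>{a..b}. F t - G t \<ge> 0"
    by (rule integral_equation_nonneg) (use assms(3) in auto)
  then show ?thesis by simp
qed

lemma integral_equation_linear_vanishes:
  fixes k y :: "real \<Rightarrow> real"
  assumes y_eq: "\<forall>t\<in>{a..b}. ((\<lambda>s. - k s * y s) has_integral y t) {a..t}"
    and k_nonneg: "\<forall>s\<in>{a..b}. k s \<ge> 0"
  shows "\<forall>t\<in>{a..b}. y t = 0"
proof -
  have "\<forall>t\<in>{a..b}. y t \<ge> 0"
    by (rule integral_equation_nonneg[where c = 0])
      (use y_eq k_nonneg in \<open>auto simp: mult_nonneg_nonpos\<close>)
  moreover have "\<forall>t\<in>{a..b}. - y t \<ge> 0"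
  proof (rule integral_equation_nonneg[where c = 0])
    show "\<forall>t\<in>{a..b}. ((\<lambda>s. - k s * - y s) has_integral (- y t - 0)) {a..t}"
      using has_integral_neg[OF y_eq[rule_format]] by simp
  qed (use k_nonneg in \<open>auto simp: mult_nonneg_nonpos\<close>)
  ultimately show ?thesis by force
qed

section \<open>Kolmogorov forward equations on sets of matched vertices\<close>

definition net_inflow ::
  "'j set \<Rightarrow> (real \<Rightarrow> 'j set \<Rightarrow> 'j \<Rightarrow> real) \<Rightarrow> (real \<Rightarrow> 'j set \<Rightarrow> real)
    \<Rightarrow> real \<Rightarrow> 'j set \<Rightarrow> real"
  where "net_inflow J r p s S =
    (\<Sum>u\<in>S. p s (S - {u}) * r s (S - {u}) u) - p s S * (\<Sum>u\<in>J - S. r s S u)"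

definition match_flux ::
  "'j set \<Rightarrow> (real \<Rightarrow> 'j set \<Rightarrow> 'j \<Rightarrow> real) \<Rightarrow> (real \<Rightarrow> 'j set \<Rightarrow> real)
    \<Rightarrow> 'j \<Rightarrow> real \<Rightarrow> real"
  where "match_flux J r p u s = (\<Sum>T\<in>{T\<in>Pow J. u \<notin> T}. p s T * r s T u)"

lemma kolmogorovD:
  assumes "kolmogorov J r p" "t \<in> {0..1}" "S \<in> Pow J"
  shows "((\<lambda>s. net_inflow J r p s S) has_integral (p t S - (if S = {} then 1 else 0))) {0..t}"
  using assms unfolding kolmogorov_def net_inflow_def by blast

lemma sum_Pow_remove_eq_sum_Pow_insert:
  assumes "finite J"
  shows "(\<Sum>S\<in>{S\<in>Pow J. P S}. \<Sum>w\<in>S. \<phi> (S - {w}) w)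
       = (\<Sum>T\<in>Pow J. \<Sum>w\<in>{w\<in>J - T. P (insert w T)}. \<phi> T w)"
proof -
  have "(\<Sum>S\<in>{S\<in>Pow J. P S}. \<Sum>w\<in>S. \<phi> (S - {w}) w)
      = (\<Sum>(S, w)\<in>Sigma {S\<in>Pow J. P S} (\<lambda>S. S). \<phi> (S - {w}) w)"
    using assms by (intro sum.Sigma) (auto intro: rev_finite_subset)
  also have "\<dots> = (\<Sum>(T, w)\<in>Sigma (Pow J) (\<lambda>T. {w\<in>J - T. P (insert w T)}). \<phi> T w)"
    by (rule sum.reindex_bij_witness[where i = "\<lambda>(T, w). (insert w T, w)"
          and j = "\<lambda>(S, w). (S - {w}, w)"]) (auto simp: insert_absorb)
  also have "\<dots> = (\<Sum>T\<in>Pow J. \<Sum>w\<in>{w\<in>J - T. P (insert w T)}. \<phi> T w)"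
    using assms by (intro sum.Sigma[symmetric]) auto
  finally show ?thesis .
qed

lemma sum_net_inflow:
  assumes "finite J"
  shows "(\<Sum>S\<in>{S\<in>Pow J. P S}. net_inflow J r p s S)
    = (\<Sum>T\<in>Pow J. \<Sum>w\<in>{w\<in>J - T. P (insert w T)}. p s T * r s T w)
      - (\<Sum>S\<in>{S\<in>Pow J. P S}. \<Sum>w\<in>J - S. p s S * r s S w)"
  unfolding net_inflow_def sum_subtractf
  using sum_Pow_remove_eq_sum_Pow_insert[OF assms, where P = P and \<phi> = "\<lambda>T w. p s T * r s T w"]
  by (simp add: sum_distrib_left)

lemma sum_net_inflow_Pow:
  assumes "finite J"
  shows "(\<Sum>S\<in>Pow J. net_inflow J r p s S) = 0"
proof -
  have "{S\<in>Pow J. True} = Pow J" "\<And>T. {w\<in>J - T. True} = J - T" by auto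
  then show ?thesis
    using sum_net_inflow[OF assms, where P = "\<lambda>_. True" and r = r and p = p and s = s] by simp
qed

lemma sum_net_inflow_member:
  assumes "finite J" "u \<in> J"
  shows "(\<Sum>S\<in>{S\<in>Pow J. u \<in> S}. net_inflow J r p s S) = match_flux J r p u s"
proof -
  have "{w\<in>J - T. u \<in> insert w T} = (if u \<in> T then J - T else {u})" for T
    using assms(2) by auto
  then have "(\<Sum>T\<in>Pow J. \<Sum>w\<in>{w\<in>J - T. u \<in> insert w T}. p s T * r s T w)
      = (\<Sum>T\<in>Pow J. if u \<in> T then (\<Sum>w\<in>J - T. p s T * r s T w) else p s T * r s T u)"
    by (intro sum.cong) auto
  also have "\<dots> = (\<Sum>S\<in>{S\<in>Pow J. u \<in> S}. \<Sum>w\<in>J - S. p s S * r s S w)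
      + match_flux J r p u s"
    unfolding match_flux_def using assms(1)
    by (simp add: sum.If_cases Int_def conj_commute)
  finally show ?thesis
    using sum_net_inflow[OF assms(1), where P = "\<lambda>S. u \<in> S" and r = r and p = p and s = s]
    by simp
qed

lemma kolmogorov_sum_Pow:
  assumes "kolmogorov J r p" "finite J" "t \<in> {0..1}"
  shows "(\<Sum>S\<in>Pow J. p t S) = 1"
proof -
  have "((\<lambda>s. \<Sum>S\<in>Pow J. net_inflow J r p s S)
      has_integral (\<Sum>S\<in>Pow J. p t S - (if S = {} then 1 else 0))) {0..t}"
    using assms(2) by (intro has_integral_sum kolmogorovD[OF assms(1,3)]) auto
  then have "(\<Sum>S\<in>Pow J. p t S - (if S = {} then 1 else 0)) = 0"
    unfolding sum_net_inflow_Pow[OF assms(2)] by simp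
  then show ?thesis
    using assms(2) by (simp add: sum_subtractf)
qed

lemma kolmogorov_match_flux:
  assumes "kolmogorov J r p" "finite J" "u \<in> J" "t \<in> {0..1}"
  shows "(match_flux J r p u has_integral aux_f J p u t) {0..t}"
proof -
  have "((\<lambda>s. \<Sum>S\<in>{S\<in>Pow J. u \<in> S}. net_inflow J r p s S)
      has_integral (\<Sum>S\<in>{S\<in>Pow J. u \<in> S}. p t S - (if S = {} then 1 else 0))) {0..t}"
    using assms(2) by (intro has_integral_sum kolmogorovD[OF assms(1,4)]) auto
  moreover have "(\<Sum>S\<in>{S\<in>Pow J. u \<in> S}. p t S - (if S = {} then 1 else 0)) = aux_f J p u t"
    unfolding aux_f_def by (intro sum.cong) auto
  ultimately show ?thesis
    unfolding sum_net_inflow_member[OF assms(2,3)] by (simp add: fun_eq_iff)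
qed

text \<open>States only grow, so induction over strict subsets works: once every predecessor
  \<open>S - {u}\<close> has nonnegative probability, \<open>p S\<close> can only decrease through its own outflow.\<close>

lemma kolmogorov_nonneg:
  assumes kol: "kolmogorov J r p" and "finite J"
    and r_nonneg: "\<And>s T u. s \<in> {0..1} \<Longrightarrow> T \<subseteq> J \<Longrightarrow> u \<in> J - T \<Longrightarrow> r s T u \<ge> 0"
    and "S \<in> Pow J" "t \<in> {0..1}"
  shows "p t S \<ge> 0"
proof -
  have "finite S" using assms(2,4) by (auto intro: rev_finite_subset)
  then have "S \<subseteq> J \<longrightarrow> (\<forall>t\<in>{0..1}. p t S \<ge> 0)"
  proof (induction S rule: finite_psubset_induct)
    case (psubset S)
    show ?case
    proof
      assume "S \<subseteq> J"
      have pred_nonneg: "p s (S - {u}) * r s (S - {u}) u \<ge> 0" if "u \<in> S" "s \<in> {0..1}" for u s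
      proof -
        have "p s (S - {u}) \<ge> 0"
          using psubset.IH[of "S - {u}"] \<open>S \<subseteq> J\<close> that by blast
        moreover have "r s (S - {u}) u \<ge> 0"
          using \<open>S \<subseteq> J\<close> that by (intro r_nonneg) auto
        ultimately show ?thesis by simp
      qed
      show "\<forall>t\<in>{0..1}. p t S \<ge> 0"
      proof (rule integral_equation_nonneg[where c = "if S = {} then 1 else 0"])
        show "\<forall>t\<in>{0..1}. ((\<lambda>s. net_inflow J r p s S)
            has_integral (p t S - (if S = {} then 1 else 0))) {0..t}"
          using kolmogorovD[OF kol] \<open>S \<subseteq> J\<close> by blast
        show "\<forall>s\<in>{0..1}. p s S < 0 \<longrightarrow> net_inflow J r p s S \<ge> 0"
        proof (intro ballI impI)
          fix s :: real assume s: "s \<in> {0..1}" and "p s S < 0"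
          have "(\<Sum>u\<in>S. p s (S - {u}) * r s (S - {u}) u) \<ge> 0"
            using pred_nonneg s by (intro sum_nonneg) auto
          moreover have "(\<Sum>u\<in>J - S. r s S u) \<ge> 0"
            using \<open>S \<subseteq> J\<close> s by (intro sum_nonneg r_nonneg) auto
          then have "p s S * (\<Sum>u\<in>J - S. r s S u) \<le> 0"
            using \<open>p s S < 0\<close> by (intro mult_nonpos_nonneg) auto
          ultimately show "net_inflow J r p s S \<ge> 0"
            unfolding net_inflow_def by linarith
        qed
      qed simp
    qed
  qed
  then show ?thesis using assms(4,5) by auto
qed

lemma aux_fbar_eq:
  assumes "finite J" "(\<Sum>S\<in>Pow J. p t S) = 1"
  shows "aux_fbar J p u t = 1 - aux_f J p u t"
proof -
  have "Pow J \<inter> {S. u \<in> S} = {S\<in>Pow J. u \<in> S}" "Pow J - {S. u \<in> S} = {S\<in>Pow J. u \<notin> S}"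
    by auto
  then show ?thesis
    using assms sum.Int_Diff[of "Pow J" "\<lambda>S. p t S" "{S. u \<in> S}"]
    unfolding aux_f_def aux_fbar_def by simp
qed

section \<open>The reference process \<open>H\<close> under RES\<close>

lemma res_rate_nonneg: "res_rate t0 s S u \<ge> 0"
  using ln_2_less_1 ln_ge_zero[of 2] unfolding res_rate_def by auto

lemma Pow_UNIV_bool: "Pow (UNIV :: bool set) = {{}, {True}, {False}, UNIV}"
  unfolding UNIV_bool by (auto simp: Pow_insert)

lemma res_sum_states:
  assumes "kolmogorov UNIV (res_rate t0) q" "t \<in> {0..1}"
  shows "q t {} + q t {True} + q t {False} + q t UNIV = 1"
  using kolmogorov_sum_Pow[OF assms(1) _ assms(2)] unfolding Pow_UNIV_bool
  by (simp add: UNIV_bool insert_commute)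

lemma net_inflow_res_singleton:
  "net_inflow UNIV (res_rate t0) q s {b} = q s {} * res_rate t0 s {} b - q s {b} * res_rate t0 s {b} (\<not> b)"
proof -
  have "UNIV - {b} = {\<not> b}" by auto
  then show ?thesis unfolding net_inflow_def by simp
qed

lemma res_f_eq: "res_f q t = q t {True} + q t UNIV"
proof -
  have "{S::bool set. True \<in> S} = {S\<in>Pow UNIV. True \<in> S}" by simp
  also have "\<dots> = {{True}, UNIV}"
    unfolding Pow_UNIV_bool by auto
  finally have "{S::bool set. True \<in> S} = {{True}, UNIV}" .
  moreover have "{True} \<noteq> (UNIV :: bool set)" by blast
  ultimately show ?thesis
    unfolding res_f_def by simp
qed

lemma res_symmetric:
  assumes kol: "kolmogorov UNIV (res_rate t0) q" and "t \<in> {0..1}"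
  shows "q t {True} = q t {False}"
proof -
  have diff_eq: "(\<lambda>s. net_inflow UNIV (res_rate t0) q s {True} - net_inflow UNIV (res_rate t0) q s {False})
      = (\<lambda>s. - res_rate t0 s {True} False * (q s {True} - q s {False}))"
  proof
    fix s
    have "res_rate t0 s {} False = res_rate t0 s {} True"
      "res_rate t0 s {False} True = res_rate t0 s {True} False"
      unfolding res_rate_def by simp_all
    then show "net_inflow UNIV (res_rate t0) q s {True} - net_inflow UNIV (res_rate t0) q s {False}
        = - res_rate t0 s {True} False * (q s {True} - q s {False})"
      unfolding net_inflow_res_singleton by (simp add: algebra_simps)
  qed
  have "\<forall>t\<in>{0..1}. ((\<lambda>s. - res_rate t0 s {True} False * (q s {True} - q s {False}))
      has_integral (q t {True} - q t {False})) {0..t}"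
  proof
    fix t :: real assume t: "t \<in> {0..1}"
    show "((\<lambda>s. - res_rate t0 s {True} False * (q s {True} - q s {False}))
        has_integral (q t {True} - q t {False})) {0..t}"
      using has_integral_diff[OF kolmogorovD[OF kol t, of "{True}"] kolmogorovD[OF kol t, of "{False}"]]
      unfolding diff_eq by simp
  qed
  then have "\<forall>t\<in>{0..1}. q t {True} - q t {False} = 0"
    by (rule integral_equation_linear_vanishes) (simp add: res_rate_nonneg)
  then show ?thesis
    using assms(2) by simp
qed

lemma res_gbar_nonneg:
  assumes "kolmogorov UNIV (res_rate t0) q" "t \<in> {0..1}"
  shows "0 \<le> 1 - res_g q t"
proof -
  have q_nonneg: "q t S \<ge> 0" for S
    using kolmogorov_nonneg[OF assms(1) _ res_rate_nonneg _ assms(2)] by simp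
  show ?thesis
    using res_sum_states[OF assms] q_nonneg[of "{}"] q_nonneg[of "{True}"] q_nonneg[of "{False}"]
    unfolding res_g_def by linarith
qed

lemma res_f_has_integral:
  assumes kol: "kolmogorov UNIV (res_rate t0) q" and "t \<in> {0..1}"
  shows "((\<lambda>s. (1 - ln 2) * (1 - res_f q s) + (if t0 < s then ln 2 * (1 - res_g q s) else 0))
      has_integral res_f q t) {0..t}"
proof -
  have "{T\<in>Pow UNIV. True \<notin> T} = {{}, {False}}"
    unfolding Pow_UNIV_bool by auto
  then have flux: "match_flux UNIV (res_rate t0) q True s
      = q s {} * res_rate t0 s {} True + q s {False} * res_rate t0 s {False} True" for s
    unfolding match_flux_def by simp
  have flux_eq: "match_flux UNIV (res_rate t0) q True s
      = (1 - ln 2) * (1 - res_f q s) + (if t0 < s then ln 2 * (1 - res_g q s) else 0)"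
    if "s \<in> {0..t}" for s
  proof -
    have "s \<in> {0..1}" using that assms(2) by auto
    then have sym: "q s {False} = q s {True}"
      and all: "q s UNIV = 1 - q s {} - 2 * q s {True}"
      using res_sum_states[OF kol \<open>s \<in> {0..1}\<close>] res_symmetric[OF kol \<open>s \<in> {0..1}\<close>] by linarith+
    have rates: "res_rate t0 s {} True = (1 - ln 2) + (if t0 < s then ln 2 else 0)"
      "res_rate t0 s {False} True = (1 - ln 2) + (if t0 < s then 2 * ln 2 else 0)"
      unfolding res_rate_def by simp_all
    show ?thesis
      unfolding flux res_f_eq res_g_def all sym rates by (cases "t0 < s") (simp_all add: algebra_simps)
  qed
  have "aux_f UNIV q True t = res_f q t"
    unfolding aux_f_def res_f_def by simp
  then have "(match_flux UNIV (res_rate t0) q True has_integral res_f q t) {0..t}"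
    using kolmogorov_match_flux[OF kol _ _ assms(2), of True] by simp
  then show ?thesis
    by (rule has_integral_eq[rotated]) (rule flux_eq)
qed

section \<open>Algorithm AUX\<close>

text \<open>Valid for every \<open>D\<close>: nothing is known about the sign of \<open>2 (1 - f\<^sub>u) - g'\<close>, since the
  AUX probabilities are not shown to be nonnegative.\<close>

lemma min_divide_mult_le:
  fixes g D :: real
  assumes "0 \<le> g"
  shows "min (g / D) 1 * D \<le> g"
proof (cases "D > 0")
  case True
  then show ?thesis using mult_right_mono[of "min (g / D) 1" "g / D" D] by simp
next
  case False
  then have "g / D \<le> 0" using assms by (simp add: divide_nonneg_nonpos)
  then show ?thesis using False assms by (cases "D = 0") simp_all
qed

lemma lam_mult_aux_prob_first_class_edge:
  assumes "u \<in> nbr i" "lbl i u"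
    and "(card (nbr i) = 1 \<and> (\<forall>j\<in>nbr i. x i j = lam i))
      \<or> (card (nbr i) = 2 \<and> (\<forall>j\<in>nbr i. x i j = lam i / 2))"
  shows "lam i * aux_prob J nbr lbl t0 gb p i s T u = x i u"
  using assms unfolding aux_prob_def by auto

text \<open>This is where the denominator \<open>2 (1 - f\<^sub>u) - g'\<^sub>u\<^sub>,\<^sub>v\<close> of AUX comes from: a second-class-labeled edge
  \<open>(i, u)\<close> is chosen with full weight when \<open>v\<close> is matched and with half weight otherwise.\<close>

lemma sum_weight_other_matched:
  assumes "finite J"
  shows "(\<Sum>T\<in>{T\<in>Pow J. u \<notin> T}. p s T * (if v \<in> T then m else m / 2))
    = m / 2 * (2 * aux_fbar J p u s - aux_gp J p u v s)"
proof -
  have unmatched_both: "{S\<in>Pow J. u \<notin> S \<and> v \<notin> S} = {T\<in>{T\<in>Pow J. u \<notin> T}. v \<notin> T}"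
    by auto
  have "aux_gp J p u v s = (\<Sum>T\<in>{T\<in>Pow J. u \<notin> T}. if v \<notin> T then p s T else 0)"
    unfolding aux_gp_def unmatched_both by (rule sum.inter_filter) (use assms in simp)
  moreover have "(\<Sum>T\<in>{T\<in>Pow J. u \<notin> T}. p s T * (if v \<in> T then m else m / 2))
      = m / 2 * (\<Sum>T\<in>{T\<in>Pow J. u \<notin> T}. 2 * p s T - (if v \<notin> T then p s T else 0))"
    unfolding sum_distrib_left by (intro sum.cong) auto
  ultimately show ?thesis
    unfolding aux_fbar_def by (simp add: sum_subtractf sum_distrib_left)
qed

lemma lam_mult_aux_prob_second_class_edge_le:
  assumes "finite J" "u \<in> nbr i" "\<not> lbl i u" "card (nbr i) = 2"
    and "x i u = lam i / 2" "lam i \<ge> 0" "gb s \<ge> 0"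
  shows "lam i * (\<Sum>T\<in>{T\<in>Pow J. u \<notin> T}. p s T * aux_prob J nbr lbl t0 gb p i s T u)
    \<le> x i u * (if t0 < s then gb s else 0)"
proof (cases "t0 < s")
  case True
  define v where "v = the_elem (nbr i - {u})"
  define D where "D = 2 * aux_fbar J p u s - aux_gp J p u v s"
  define m where "m = min (gb s / D) 1"
  have "aux_prob J nbr lbl t0 gb p i s T u = (if v \<in> T then m else m / 2)" for T
    unfolding aux_prob_def Let_def v_def D_def m_def using assms(3,4) True by simp
  then have "lam i * (\<Sum>T\<in>{T\<in>Pow J. u \<notin> T}. p s T * aux_prob J nbr lbl t0 gb p i s T u)
      = lam i * (\<Sum>T\<in>{T\<in>Pow J. u \<notin> T}. p s T * (if v \<in> T then m else m / 2))"
    by simp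
  also have "\<dots> = x i u * (m * D)"
    unfolding sum_weight_other_matched[OF assms(1)] D_def assms(5) by simp
  also have "\<dots> \<le> x i u * gb s"
    unfolding m_def using min_divide_mult_le[OF assms(7)] assms(5,6) by (intro mult_left_mono) auto
  finally show ?thesis using True by simp
next
  case False
  then show ?thesis unfolding aux_prob_def using assms(3,4) by simp
qed

lemma aux_edge_flux_le:
  assumes "finite J" "u \<in> nbr i" "lam i > 0" "gb s \<ge> 0"
    and kind: "(card (nbr i) = 1 \<and> (\<forall>j\<in>nbr i. x i j = lam i))
      \<or> (card (nbr i) = 2 \<and> (\<forall>j\<in>nbr i. x i j = lam i / 2))"
    and single_first_class: "card (nbr i) = 1 \<longrightarrow> (\<forall>j\<in>nbr i. lbl i j)"
  shows "lam i * (\<Sum>T\<in>{T\<in>Pow J. u \<notin> T}. p s T * aux_prob J nbr lbl t0 gb p i s T u)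
    \<le> x i u * (if lbl i u then aux_fbar J p u s else if t0 < s then gb s else 0)"
proof (cases "lbl i u")
  case True
  have edge: "lam i * aux_prob J nbr lbl t0 gb p i s T u = x i u" for T
    using lam_mult_aux_prob_first_class_edge[where x = x and lam = lam and nbr = nbr and lbl = lbl,
        OF assms(2) True kind] .
  have "lam i * (\<Sum>T\<in>{T\<in>Pow J. u \<notin> T}. p s T * aux_prob J nbr lbl t0 gb p i s T u)
      = (\<Sum>T\<in>{T\<in>Pow J. u \<notin> T}. p s T * (lam i * aux_prob J nbr lbl t0 gb p i s T u))"
    by (simp add: sum_distrib_left mult.left_commute)
  also have "\<dots> = (\<Sum>T\<in>{T\<in>Pow J. u \<notin> T}. p s T * x i u)"
    unfolding edge ..
  finally show ?thesis
    using True unfolding aux_fbar_def by (simp add: sum_distrib_left mult_ac)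
next
  case False
  then have "card (nbr i) = 2" "x i u = lam i / 2"
    using kind single_first_class assms(2) by auto
  then show ?thesis
    using lam_mult_aux_prob_second_class_edge_le[where nbr = nbr and lbl = lbl and x = x
        and lam = lam and gb = gb and i = i and u = u and s = s, OF assms(1,2) False]
      assms(3,4) False
    by simp
qed

lemma sum_mult_if_split:
  fixes w :: "'a \<Rightarrow> real"
  assumes "finite A" "sum w A = 1" "(\<Sum>i\<in>{i\<in>A. P i}. w i) = c"
  shows "(\<Sum>i\<in>A. w i * (if P i then a else b)) = c * a + (1 - c) * b"
proof -
  have split: "sum g A = (\<Sum>i\<in>{i\<in>A. P i}. g i) + (\<Sum>i\<in>{i\<in>A. \<not> P i}. g i)" for g :: "'a \<Rightarrow> real"
    using sum.If_cases[OF assms(1), of P g g] by (simp add: Int_def conj_commute)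
  have "(\<Sum>i\<in>{i\<in>A. \<not> P i}. w i) = 1 - c"
    using split[of w] assms(2,3) by simp
  then show ?thesis
    using split[of "\<lambda>i. w i * (if P i then a else b)"] assms(3)
    by (simp add: sum_distrib_right[symmetric])
qed

lemma aux_match_flux_le:
  fixes I :: "'i set" and J :: "'j set" and x :: "'i \<Rightarrow> 'j \<Rightarrow> real"
  assumes "finite I" "finite J"
    and lam_pos: "\<forall>i\<in>I. lam i > 0"
    and classes: "\<forall>i\<in>I. (card (nbr i) = 1 \<and> (\<forall>j\<in>nbr i. x i j = lam i))
                \<or> (card (nbr i) = 2 \<and> (\<forall>j\<in>nbr i. x i j = lam i / 2))"
    and x_sum: "\<forall>j\<in>J. (\<Sum>i\<in>{i\<in>I. j \<in> nbr i}. x i j) = 1"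
    and single_first_class: "\<forall>i\<in>I. card (nbr i) = 1 \<longrightarrow> (\<forall>j\<in>nbr i. lbl i j)"
    and x_first_class: "\<forall>j\<in>J. (\<Sum>i\<in>{i\<in>I. j \<in> nbr i \<and> lbl i j}. x i j) = 1 - ln 2"
    and "u \<in> J" "gb s \<ge> 0"
  shows "match_flux J (aux_rate I J nbr lam lbl t0 gb p) p u s
    \<le> (1 - ln 2) * aux_fbar J p u s + (if t0 < s then ln 2 * gb s else 0)"
proof -
  define Iu where "Iu = {i\<in>I. u \<in> nbr i}"
  define gg where "gg = (if t0 < s then gb s else 0)"
  have "match_flux J (aux_rate I J nbr lam lbl t0 gb p) p u s
      = (\<Sum>i\<in>Iu. lam i * (\<Sum>T\<in>{T\<in>Pow J. u \<notin> T}. p s T * aux_prob J nbr lbl t0 gb p i s T u))"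
    unfolding match_flux_def aux_rate_def Iu_def sum_distrib_left
    by (subst sum.swap) (simp add: mult_ac)
  also have "\<dots> \<le> (\<Sum>i\<in>Iu. x i u * (if lbl i u then aux_fbar J p u s else gg))"
    unfolding gg_def Iu_def
    by (intro sum_mono aux_edge_flux_le) (use assms in auto)
  also have "\<dots> = (1 - ln 2) * aux_fbar J p u s + (1 - (1 - ln 2)) * gg"
  proof (rule sum_mult_if_split)
    have "{i\<in>Iu. lbl i u} = {i\<in>I. u \<in> nbr i \<and> lbl i u}"
      unfolding Iu_def by auto
    then show "(\<Sum>i\<in>{i\<in>Iu. lbl i u}. x i u) = 1 - ln 2"
      using x_first_class \<open>u \<in> J\<close> by simp
  qed (use assms(1) x_sum \<open>u \<in> J\<close> in \<open>simp_all add: Iu_def\<close>)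
  finally show ?thesis
    unfolding gg_def by (cases "t0 < s") simp_all
qed

theorem lemma4p3:
  fixes I :: "'i set" and J :: "'j set" and nbr :: "'i \<Rightarrow> 'j set"
    and lam :: "'i \<Rightarrow> real" and x :: "'i \<Rightarrow> 'j \<Rightarrow> real" and lbl :: "'i \<Rightarrow> 'j \<Rightarrow> bool"
    and t0 :: real and q :: "real \<Rightarrow> bool set \<Rightarrow> real" and p :: "real \<Rightarrow> 'j set \<Rightarrow> real"
    and u :: 'j and t :: real
  assumes "finite I" and "finite J"
    and "\<forall>i\<in>I. lam i > 0"
    and "\<forall>i\<in>I. nbr i \<subseteq> J"
    and "\<forall>i\<in>I. (card (nbr i) = 1 \<and> (\<forall>j\<in>nbr i. x i j = lam i))
                \<or> (card (nbr i) = 2 \<and> (\<forall>j\<in>nbr i. x i j = lam i / 2))"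
    and "\<forall>j\<in>J. (\<Sum>i\<in>{i\<in>I. j \<in> nbr i}. x i j) = 1"
    and "\<forall>i\<in>I. card (nbr i) = 1 \<longrightarrow> (\<forall>j\<in>nbr i. lbl i j)"
    and "\<forall>j\<in>J. (\<Sum>i\<in>{i\<in>I. j \<in> nbr i \<and> lbl i j}. x i j) = 1 - ln 2"
    and "kolmogorov (UNIV :: bool set) (res_rate t0) q"
    and "kolmogorov J (aux_rate I J nbr lam lbl t0 (\<lambda>s. 1 - res_g q s) p) p"
    and "u \<in> J" and "t \<in> {0..1}"
  shows "aux_f J p u t \<le> res_f q t"
proof -
  define gb where "gb = (\<lambda>s. 1 - res_g q s)"
  define r where "r = aux_rate I J nbr lam lbl t0 gb p"
  have kol: "kolmogorov J r p"
    using assms(10) unfolding r_def gb_def .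
  have catch_up: "match_flux J r p u s
      \<le> (1 - ln 2) * (1 - res_f q s) + (if t0 < s then ln 2 * gb s else 0)"
    if s: "s \<in> {0..1}" and ahead: "res_f q s < aux_f J p u s" for s
  proof -
    have fbar: "aux_fbar J p u s = 1 - aux_f J p u s"
      by (rule aux_fbar_eq[OF assms(2)]) (rule kolmogorov_sum_Pow[OF kol assms(2) s])
    have "match_flux J r p u s
        \<le> (1 - ln 2) * aux_fbar J p u s + (if t0 < s then ln 2 * gb s else 0)"
      unfolding r_def using assms(1-3,5-8,11)
      by (rule aux_match_flux_le) (use res_gbar_nonneg[OF assms(9) s] in \<open>simp add: gb_def\<close>)
    also have "\<dots> \<le> (1 - ln 2) * (1 - res_f q s) + (if t0 < s then ln 2 * gb s else 0)"
      unfolding fbar using ahead ln_2_less_1 by (intro add_right_mono mult_left_mono) auto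
    finally show ?thesis .
  qed
  have "\<forall>t\<in>{0..1}. aux_f J p u t \<le> res_f q t"
  proof (rule integral_equation_comparison[where c = 0])
    show "\<forall>t\<in>{0..1}. ((\<lambda>s. (1 - ln 2) * (1 - res_f q s) + (if t0 < s then ln 2 * gb s else 0))
        has_integral (res_f q t - 0)) {0..t}"
      using res_f_has_integral[OF assms(9)] unfolding gb_def by simp
    show "\<forall>t\<in>{0..1}. (match_flux J r p u has_integral (aux_f J p u t - 0)) {0..t}"
      using kolmogorov_match_flux[OF kol assms(2,11)] by simp
  qed (use catch_up in blast)
  then show ?thesis
    using assms(12) by blast
qed

end
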